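(* Let $z_n$ be bounded in $W^{1,2}(\Omega;\mathbb{R}^m)$ with $\{|\nabla z_n|^2\}$ equiintegrable. Let $\alpha_n>0$ with $\alpha_n\to0$ and $\alpha_n\nabla z_n$ bounded in $L^\infty$. Suppose $\{\nabla z_n\}$ generates the Young measure $\nu=\{\nu_x\}_{x\in\Omega}$, and set $m(x)=\int_{\mathbb{R}^{m\times d}}|F|^2d\nu_x(F)$. Then there is a subsequence (not relabeled) such that $$\mathcal F(x,\alpha_n,\nabla z_n)\rightharpoonup U(x,0)m(x)+\tfrac12\int_{\mathbb{R}^{m\times d}}(\mathsf L(x)F,F)\,d\nu_x(F)$$ weakly in $L^1(\Omega)$.
   Context: $\Omega\subset\mathbb{R}^d$ is a bounded domain with $C^1$ boundary. $(A,B)=\mathrm{tr}(AB^T)$ and $|\cdot|$ is the Frobenius norm. $U:\overline\Omega\times\mathbb{R}^{m\times d}\to\mathbb{R}$ is continuous, and $\mathsf L$ is a continuous fourth-order tensor field on $\overline\Omega$. $\mathcal F(x,\alpha,G)=U(x,\alpha G)|G|^2+\tfrac12(\mathsf L(x)G,G)$. *)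

theory Defs
  imports "HOL-Analysis.Analysis" "HOL-Probability.Probability"
begin

abbreviation leb_on :: "'a::euclidean_space set \<Rightarrow> 'a measure" where
  "leb_on \<Omega> \<equiv> restrict_space lebesgue \<Omega>"

coinductive smooth_fun :: "('a::real_normed_vector \<Rightarrow> real) \<Rightarrow> bool" where
  "(\<forall>x. \<phi> differentiable (at x)) \<Longrightarrow>
   (\<forall>v. smooth_fun (\<lambda>x. frechet_derivative \<phi> (at x) v)) \<Longrightarrow> smooth_fun \<phi>"

definition test_fun :: "'a::euclidean_space set \<Rightarrow> ('a \<Rightarrow> real) \<Rightarrow> bool" where
  "test_fun \<Omega> \<phi> \<longleftrightarrow> smooth_fun \<phi> \<and> compact (closure {x. \<phi> x \<noteq> 0})
      \<and> closure {x. \<phi> x \<noteq> 0} \<subseteq> \<Omega>"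

text \<open>Bounded domain with C^1 boundary (local level-set description).\<close>
definition C1_boundary :: "'a::euclidean_space set \<Rightarrow> bool" where
  "C1_boundary \<Omega> \<longleftrightarrow> (\<forall>p\<in>frontier \<Omega>. \<exists>r>0. \<exists>\<phi>::'a \<Rightarrow> real.
      (\<forall>x\<in>ball p r. \<phi> differentiable (at x))
    \<and> (\<forall>v. continuous_on (ball p r) (\<lambda>x. frechet_derivative \<phi> (at x) v))
    \<and> frechet_derivative \<phi> (at p) \<noteq> (\<lambda>v. 0)
    \<and> \<Omega> \<inter> ball p r = {x\<in>ball p r. \<phi> x < 0})"

definition bounded_C1_domain :: "'a::euclidean_space set \<Rightarrow> bool" where
  "bounded_C1_domain \<Omega> \<longleftrightarrow> open \<Omega> \<and> connected \<Omega> \<and> \<Omega> \<noteq> {} \<and> bounded \<Omega> \<and> C1_boundary \<Omega>"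

text \<open>G is the weak gradient of z on Omega: (G x)\$i\$j is the weak derivative
  of the i-th component of z in direction j.\<close>
definition weak_gradient ::
  "(real^'d) set \<Rightarrow> (real^'d \<Rightarrow> real^'m) \<Rightarrow> (real^'d \<Rightarrow> real^'d^'m) \<Rightarrow> bool" where
  "weak_gradient \<Omega> z G \<longleftrightarrow> (\<forall>\<phi>. test_fun \<Omega> \<phi> \<longrightarrow> (\<forall>i j.
      (\<integral>x. (z x $ i) * frechet_derivative \<phi> (at x) (axis j 1) \<partial>leb_on \<Omega>)
      = - (\<integral>x. (G x $ i $ j) * \<phi> x \<partial>leb_on \<Omega>)))"

definition W12 ::
  "(real^'d) set \<Rightarrow> (real^'d \<Rightarrow> real^'m) \<Rightarrow> (real^'d \<Rightarrow> real^'d^'m) \<Rightarrow> bool" where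
  "W12 \<Omega> z G \<longleftrightarrow> z \<in> borel_measurable (leb_on \<Omega>) \<and> G \<in> borel_measurable (leb_on \<Omega>)
     \<and> integrable (leb_on \<Omega>) (\<lambda>x. norm (z x) ^ 2)
     \<and> integrable (leb_on \<Omega>) (\<lambda>x. norm (G x) ^ 2)
     \<and> weak_gradient \<Omega> z G"

definition Linfty :: "'a::euclidean_space set \<Rightarrow> ('a \<Rightarrow> real) \<Rightarrow> bool" where
  "Linfty \<Omega> g \<longleftrightarrow> g \<in> borel_measurable (leb_on \<Omega>)
     \<and> (\<exists>C. AE x in leb_on \<Omega>. \<bar>g x\<bar> \<le> C)"

definition equiintegrable :: "'a::euclidean_space set \<Rightarrow> (nat \<Rightarrow> 'a \<Rightarrow> real) \<Rightarrow> bool" where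
  "equiintegrable \<Omega> f \<longleftrightarrow> (\<forall>n. integrable (leb_on \<Omega>) (f n)) \<and>
     (\<forall>e>0. \<exists>\<delta>>0. \<forall>n. \<forall>E. E \<in> sets lebesgue \<and> E \<subseteq> \<Omega> \<and> measure lebesgue E < \<delta>
        \<longrightarrow> (\<integral>x. \<bar>f n x\<bar> \<partial>leb_on E) < e)"

definition generates_YM ::
  "'a::euclidean_space set \<Rightarrow> (nat \<Rightarrow> 'a \<Rightarrow> 'b::euclidean_space) \<Rightarrow> ('a \<Rightarrow> 'b measure) \<Rightarrow> bool" where
  "generates_YM \<Omega> V \<nu> \<longleftrightarrow>
     (\<forall>x\<in>\<Omega>. prob_space (\<nu> x) \<and> sets (\<nu> x) = sets borel)
   \<and> (\<forall>f::'b \<Rightarrow> real. continuous_on UNIV f \<and> (f \<longlongrightarrow> 0) at_infinity \<longrightarrow>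
        (\<lambda>x. \<integral>F. f F \<partial>\<nu> x) \<in> borel_measurable (leb_on \<Omega>)
      \<and> (\<forall>g. integrable (leb_on \<Omega>) g \<longrightarrow>
          (\<lambda>n. \<integral>x. g x * f (V n x) \<partial>leb_on \<Omega>)
            \<longlonglongrightarrow> (\<integral>x. g x * (\<integral>F. f F \<partial>\<nu> x) \<partial>leb_on \<Omega>)))"

definition weak_L1_conv :: "'a::euclidean_space set \<Rightarrow> (nat \<Rightarrow> 'a \<Rightarrow> real) \<Rightarrow> ('a \<Rightarrow> real) \<Rightarrow> bool" where
  "weak_L1_conv \<Omega> f h \<longleftrightarrow> (\<forall>n. integrable (leb_on \<Omega>) (f n)) \<and> integrable (leb_on \<Omega>) h
     \<and> (\<forall>g. Linfty \<Omega> g \<longrightarrow>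
          (\<lambda>n. \<integral>x. g x * f n x \<partial>leb_on \<Omega>) \<longlonglongrightarrow> (\<integral>x. g x * h x \<partial>leb_on \<Omega>))"

definition calF ::
  "(real^'d \<Rightarrow> real^'d^'m \<Rightarrow> real) \<Rightarrow> (real^'d \<Rightarrow> ((real^'d^'m) \<Rightarrow>\<^sub>L (real^'d^'m)))
    \<Rightarrow> real^'d \<Rightarrow> real \<Rightarrow> real^'d^'m \<Rightarrow> real" where
  "calF U L x \<alpha> G = U x (\<alpha> *\<^sub>R G) * (norm G)\<^sup>2 + 1/2 * (blinfun_apply (L x) G \<bullet> G)"

end

(* Write F(x, alpha_n, grad z_n) as
     (U(x, alpha_n grad z_n) - U(x, 0)) |grad z_n|^2 + U(x, 0) |grad z_n|^2 + 1/2 (L(x) grad z_n, grad z_n).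
   The last two terms are integrands of quadratic growth evaluated along the generating sequence.
   The Young measure representation, assumed only for C_0 integrands, extends to them by truncation
   with cut-off functions: equiintegrability of |grad z_n|^2 makes the truncation error small
   uniformly in n, and the same truncation shows that nu_x has finite second moment for a.e. x.
   In the first term the coefficient is bounded (alpha_n grad z_n is bounded) and, by uniform
   continuity of U on compact sets, small wherever |grad z_n| < k once alpha_n k is small; the rest
   lives on {|grad z_n| >= k}, where equiintegrability again makes it small uniformly in n.
   So the whole sequence converges and no subsequence is needed. *)

theory Submission
  imports Defs
begin

section \<open>Weak convergence in L1 against bounded test functions\<close>

definition weak_L1_lim :: "'a measure \<Rightarrow> (nat \<Rightarrow> 'a \<Rightarrow> real) \<Rightarrow> ('a \<Rightarrow> real) \<Rightarrow> bool" where
  "weak_L1_lim M f h \<longleftrightarrow> (\<forall>n. integrable M (f n)) \<and> integrable M h \<and>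
     (\<forall>g Cg. g \<in> borel_measurable M \<longrightarrow> (AE x in M. \<bar>g x\<bar> \<le> Cg) \<longrightarrow>
        (\<lambda>n. \<integral>x. g x * f n x \<partial>M) \<longlonglongrightarrow> (\<integral>x. g x * h x \<partial>M))"

lemma integrable_bounded_mult:
  fixes g f :: "'a \<Rightarrow> real"
  assumes "g \<in> borel_measurable M" "AE x in M. \<bar>g x\<bar> \<le> Cg" "integrable M f"
  shows "integrable M (\<lambda>x. g x * f x)"
proof (rule Bochner_Integration.integrable_bound[of M "\<lambda>x. \<bar>Cg\<bar> * f x"])
  show "integrable M (\<lambda>x. \<bar>Cg\<bar> * f x)" using assms(3) by simp
  show "(\<lambda>x. g x * f x) \<in> borel_measurable M"
    using assms(1) borel_measurable_integrable[OF assms(3)] by measurable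
  show "AE x in M. norm (g x * f x) \<le> norm (\<bar>Cg\<bar> * f x)"
    using assms(2) by eventually_elim (auto simp: abs_mult intro!: mult_right_mono)
qed

lemma weak_L1_lim_add:
  assumes "weak_L1_lim M f h" "weak_L1_lim M f' h'"
  shows "weak_L1_lim M (\<lambda>n x. f n x + f' n x) (\<lambda>x. h x + h' x)"
  unfolding weak_L1_lim_def
proof (intro conjI allI impI)
  show "integrable M (\<lambda>x. f n x + f' n x)" for n using assms unfolding weak_L1_lim_def by auto
  show "integrable M (\<lambda>x. h x + h' x)" using assms unfolding weak_L1_lim_def by auto
  fix g :: "'a \<Rightarrow> real" and Cg :: real
  assume g: "g \<in> borel_measurable M" "AE x in M. \<bar>g x\<bar> \<le> Cg"
  have "integrable M (\<lambda>x. g x * f n x)" "integrable M (\<lambda>x. g x * f' n x)"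
    "integrable M (\<lambda>x. g x * h x)" "integrable M (\<lambda>x. g x * h' x)" for n
    using assms integrable_bounded_mult[OF g] unfolding weak_L1_lim_def by auto
  moreover have "(\<lambda>n. (\<integral>x. g x * f n x \<partial>M) + (\<integral>x. g x * f' n x \<partial>M))
      \<longlonglongrightarrow> (\<integral>x. g x * h x \<partial>M) + (\<integral>x. g x * h' x \<partial>M)"
    using assms g unfolding weak_L1_lim_def by (intro tendsto_add) auto
  ultimately show "(\<lambda>n. \<integral>x. g x * (f n x + f' n x) \<partial>M) \<longlonglongrightarrow> (\<integral>x. g x * (h x + h' x) \<partial>M)"
    by (simp add: distrib_left)
qed

lemma weak_L1_lim_sum:
  assumes "finite I" "\<And>i. i \<in> I \<Longrightarrow> weak_L1_lim M (f i) (h i)"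
  shows "weak_L1_lim M (\<lambda>n x. \<Sum>i\<in>I. f i n x) (\<lambda>x. \<Sum>i\<in>I. h i x)"
  using assms
proof (induction I rule: finite_induct)
  case empty
  then show ?case by (simp add: weak_L1_lim_def)
next
  case (insert i I)
  then show ?case by (simp add: weak_L1_lim_add)
qed

lemma weak_L1_lim_mult_bounded:
  assumes lim: "weak_L1_lim M f h"
    and u: "u \<in> borel_measurable M" "AE x in M. \<bar>u x\<bar> \<le> Cu"
  shows "weak_L1_lim M (\<lambda>n x. u x * f n x) (\<lambda>x. u x * h x)"
  unfolding weak_L1_lim_def
proof (intro conjI allI impI)
  show "integrable M (\<lambda>x. u x * f n x)" for n
    using lim integrable_bounded_mult[OF u] unfolding weak_L1_lim_def by auto
  show "integrable M (\<lambda>x. u x * h x)"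
    using lim integrable_bounded_mult[OF u] unfolding weak_L1_lim_def by auto
  fix g :: "'a \<Rightarrow> real" and Cg :: real
  assume g: "g \<in> borel_measurable M" "AE x in M. \<bar>g x\<bar> \<le> Cg"
  have "(\<lambda>x. g x * u x) \<in> borel_measurable M" using g u by measurable
  moreover have "AE x in M. \<bar>g x * u x\<bar> \<le> \<bar>Cg\<bar> * \<bar>Cu\<bar>"
    using g(2) u(2) by eventually_elim (auto simp: abs_mult intro!: mult_mono)
  ultimately have "(\<lambda>n. \<integral>x. (g x * u x) * f n x \<partial>M) \<longlonglongrightarrow> (\<integral>x. (g x * u x) * h x \<partial>M)"
    using lim unfolding weak_L1_lim_def by blast
  then show "(\<lambda>n. \<integral>x. g x * (u x * f n x) \<partial>M) \<longlonglongrightarrow> (\<integral>x. g x * (u x * h x) \<partial>M)"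
    by (simp add: mult.assoc)
qed

lemma weak_L1_lim_cmult:
  "weak_L1_lim M f h \<Longrightarrow> weak_L1_lim M (\<lambda>n x. c * f n x) (\<lambda>x. c * h x)"
  using weak_L1_lim_mult_bounded[of M f h "\<lambda>x. c" "\<bar>c\<bar>"] by simp

lemma weak_L1_lim_AE_cong:
  assumes lim: "weak_L1_lim M f h" and f': "\<And>n x. x \<in> space M \<Longrightarrow> f n x = f' n x"
    and h': "h' \<in> borel_measurable M" "AE x in M. h x = h' x"
  shows "weak_L1_lim M f' h'"
  unfolding weak_L1_lim_def
proof (intro conjI allI impI)
  show "integrable M (f' n)" for n
    using lim f' Bochner_Integration.integrable_cong[of M M "f n" "f' n"]
    unfolding weak_L1_lim_def by auto
  have h: "integrable M h" using lim unfolding weak_L1_lim_def by auto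
  then show "integrable M h'" using integrable_cong_AE_imp[OF h h'(1)] h'(2) by simp
  fix g :: "'a \<Rightarrow> real" and Cg :: real
  assume g: "g \<in> borel_measurable M" "AE x in M. \<bar>g x\<bar> \<le> Cg"
  have "(\<lambda>n. \<integral>x. g x * f n x \<partial>M) \<longlonglongrightarrow> (\<integral>x. g x * h x \<partial>M)"
    using lim g unfolding weak_L1_lim_def by blast
  moreover have "(\<integral>x. g x * f n x \<partial>M) = (\<integral>x. g x * f' n x \<partial>M)" for n
    using f' by (intro Bochner_Integration.integral_cong) auto
  moreover have "(\<integral>x. g x * h x \<partial>M) = (\<integral>x. g x * h' x \<partial>M)"
    using g h' borel_measurable_integrable[OF h] by (intro integral_cong_AE) auto
  ultimately show "(\<lambda>n. \<integral>x. g x * f' n x \<partial>M) \<longlonglongrightarrow> (\<integral>x. g x * h' x \<partial>M)" by simp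
qed

lemma weak_L1_conv_iff_weak_L1_lim: "weak_L1_conv \<Omega> f h \<longleftrightarrow> weak_L1_lim (leb_on \<Omega>) f h"
  unfolding weak_L1_lim_def weak_L1_conv_def Linfty_def by blast

lemma tendsto_zero_by_multiple:
  fixes a :: "nat \<Rightarrow> real"
  assumes "\<And>e. e > 0 \<Longrightarrow> \<forall>\<^sub>F n in sequentially. \<bar>a n\<bar> \<le> K * e"
  shows "a \<longlonglongrightarrow> 0"
proof (rule tendstoI)
  fix r :: real assume "r > 0"
  then have "\<forall>\<^sub>F n in sequentially. \<bar>a n\<bar> \<le> K * (r / (\<bar>K\<bar> + 1))"
    by (intro assms) auto
  moreover have "K * (r / (\<bar>K\<bar> + 1)) \<le> \<bar>K\<bar> * (r / (\<bar>K\<bar> + 1))"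
    using \<open>r > 0\<close> by (intro mult_right_mono) auto
  moreover have "\<bar>K\<bar> * (r / (\<bar>K\<bar> + 1)) < r"
    using \<open>r > 0\<close> by (simp add: field_simps)
  ultimately show "\<forall>\<^sub>F n in sequentially. dist (a n) 0 < r"
    by (auto elim: eventually_mono)
qed

lemma tendsto_of_uniform_approx:
  fixes a :: "nat \<Rightarrow> real" and b :: "nat \<Rightarrow> nat \<Rightarrow> real"
  assumes approx: "\<forall>e>0. \<forall>\<^sub>F k in sequentially. \<forall>n. \<bar>a n - b k n\<bar> \<le> K * e"
    and inner: "\<And>k. b k \<longlonglongrightarrow> c k" and outer: "c \<longlonglongrightarrow> l"
  shows "a \<longlonglongrightarrow> l"
proof -
  have "(\<lambda>n. a n - l) \<longlonglongrightarrow> 0"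
  proof (rule tendsto_zero_by_multiple[where K = "K + 2"])
    fix e :: real assume e: "e > 0"
    have "\<forall>\<^sub>F k in sequentially. (\<forall>n. \<bar>a n - b k n\<bar> \<le> K * e) \<and> dist (c k) l < e"
      using approx e tendstoD[OF outer e] by (simp add: eventually_conj)
    then obtain k where k: "\<And>n. \<bar>a n - b k n\<bar> \<le> K * e" "\<bar>c k - l\<bar> < e"
      unfolding eventually_sequentially dist_real_def by blast
    show "\<forall>\<^sub>F n in sequentially. \<bar>a n - l\<bar> \<le> (K + 2) * e"
      using tendstoD[OF inner[of k] e]
    proof eventually_elim
      case (elim n)
      then show ?case using k(1)[of n] k(2) unfolding dist_real_def by (simp add: algebra_simps)
    qed
  qed
  then show ?thesis by (simp add: LIM_zero_iff)
qed

section \<open>Truncation and integrands of quadratic growth\<close>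

definition cutoff :: "nat \<Rightarrow> 'b::real_normed_vector \<Rightarrow> real" where
  "cutoff k F = max 0 (min 1 (real k + 1 - norm F))"

lemma continuous_on_cutoff: "continuous_on A (cutoff k)"
  unfolding cutoff_def by (intro continuous_intros)

lemma cutoff_nonneg: "0 \<le> cutoff k F"
  and cutoff_le_one: "cutoff k F \<le> 1"
  unfolding cutoff_def by auto

lemma abs_cutoff_le_one: "\<bar>cutoff k F\<bar> \<le> 1"
  unfolding cutoff_def by auto

lemma cutoff_eq_one: "norm F \<le> real k \<Longrightarrow> cutoff k F = 1"
  unfolding cutoff_def by auto

lemma cutoff_eq_zero: "real k + 1 \<le> norm F \<Longrightarrow> cutoff k F = 0"
  unfolding cutoff_def by auto

lemma cutoff_mono: "k \<le> k' \<Longrightarrow> cutoff k F \<le> cutoff k' F"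
  unfolding cutoff_def by auto

lemma tendsto_cutoff: "(\<lambda>k. cutoff k F) \<longlonglongrightarrow> 1"
proof -
  obtain k0 :: nat where "norm F \<le> real k0" using real_arch_simple by blast
  then have "\<forall>\<^sub>F k in sequentially. cutoff k F = 1"
    by (intro eventually_sequentiallyI[of k0]) (auto intro!: cutoff_eq_one)
  then show ?thesis by (rule tendsto_eventually)
qed

lemma tendsto_mult_cutoff: "(\<lambda>k. \<phi> F * cutoff k F) \<longlonglongrightarrow> \<phi> F"
  using tendsto_mult[OF tendsto_const tendsto_cutoff, of "\<phi> F" F] by simp

lemma abs_mult_cutoff_le: "\<bar>\<phi> F * cutoff k F\<bar> \<le> \<bar>\<phi> F\<bar>"
  by (simp add: abs_mult mult_left_le abs_cutoff_le_one)

lemma continuous_on_mult_cutoff: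
  "continuous_on UNIV \<phi> \<Longrightarrow> continuous_on UNIV (\<lambda>F. \<phi> F * cutoff k F)"
  by (intro continuous_on_mult continuous_on_cutoff)

lemma tendsto_mult_cutoff_at_infinity: "((\<lambda>F. \<phi> F * cutoff k F) \<longlongrightarrow> 0) at_infinity"
proof -
  have "\<forall>\<^sub>F F in at_infinity. \<phi> F * cutoff k F = 0"
    unfolding eventually_at_infinity by (rule exI[of _ "real k + 1"]) (auto simp: cutoff_eq_zero)
  then show ?thesis by (simp add: tendsto_eventually)
qed

lemma abs_mult_one_minus_cutoff_le:
  assumes "\<bar>\<phi> F\<bar> \<le> K * norm F^2"
  shows "\<bar>\<phi> F * (1 - cutoff k F)\<bar> \<le> \<bar>K\<bar> * (if real k \<le> norm F then norm F^2 else 0)"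
proof (cases "real k \<le> norm F")
  case True
  have "\<bar>1 - cutoff k F\<bar> \<le> 1"
    using cutoff_nonneg[of k F] cutoff_le_one[of k F] by (simp add: abs_le_iff)
  then have "\<bar>\<phi> F * (1 - cutoff k F)\<bar> \<le> \<bar>\<phi> F\<bar>"
    by (simp add: abs_mult mult_left_le)
  also have "\<dots> \<le> \<bar>K\<bar> * norm F^2"
    using assms mult_right_mono[OF abs_ge_self[of K], of "norm F^2"] by simp
  finally show ?thesis using True by simp
next
  case False
  then show ?thesis by (simp add: cutoff_eq_one)
qed

lemma bounded_mult_cutoff:
  fixes \<phi> :: "'b::euclidean_space \<Rightarrow> real"
  assumes "continuous_on UNIV \<phi>"
  obtains B where "\<And>F. \<bar>\<phi> F * cutoff k F\<bar> \<le> B"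
proof -
  have "compact (\<phi> ` cball 0 (real k + 1))"
    by (intro compact_continuous_image continuous_on_subset[OF assms]) auto
  then obtain B where B: "\<forall>y\<in>\<phi> ` cball 0 (real k + 1). norm y \<le> B"
    using compact_imp_bounded bounded_iff by blast
  have "\<bar>\<phi> F * cutoff k F\<bar> \<le> B" for F
  proof (cases "norm F \<le> real k + 1")
    case True
    then show ?thesis using B abs_mult_cutoff_le[of \<phi> F k] by force
  next
    case False
    have "norm (\<phi> 0) \<le> B" using B by simp
    then have "0 \<le> B" by (meson norm_ge_zero order_trans)
    with False show ?thesis by (simp add: cutoff_eq_zero)
  qed
  then show thesis by (rule that)
qed

lemma integrable_quadratic_growth:
  fixes \<psi> :: "'b::real_normed_vector \<Rightarrow> real"
  assumes "integrable N (\<lambda>F. norm F^2)" "\<psi> \<in> borel_measurable N" "\<And>F. \<bar>\<psi> F\<bar> \<le> K * norm F^2"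
  shows "integrable N \<psi>"
  by (rule Bochner_Integration.integrable_bound[of N "\<lambda>F. K * norm F^2"])
    (use assms in \<open>auto intro!: AE_I2 order_trans[OF _ abs_ge_self]\<close>)

lemma abs_integral_quadratic_growth_le:
  fixes \<psi> :: "'b::real_normed_vector \<Rightarrow> real"
  assumes "integrable N (\<lambda>F. norm F^2)" "\<psi> \<in> borel_measurable N" "\<And>F. \<bar>\<psi> F\<bar> \<le> K * norm F^2"
  shows "\<bar>\<integral>F. \<psi> F \<partial>N\<bar> \<le> K * (\<integral>F. norm F^2 \<partial>N)"
proof -
  have "\<bar>\<integral>F. \<psi> F \<partial>N\<bar> \<le> (\<integral>F. \<bar>\<psi> F\<bar> \<partial>N)" by (rule integral_abs_bound)
  also have "\<dots> \<le> (\<integral>F. K * norm F^2 \<partial>N)"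
    using assms integrable_quadratic_growth[OF assms] by (intro integral_mono) auto
  finally show ?thesis by simp
qed

lemma continuous_on_norm_sq: "continuous_on UNIV (\<lambda>F::'b::real_normed_vector. norm F^2)"
  by (intro continuous_intros)

lemma abs_inner_Basis_mult_le:
  fixes F :: "'b::euclidean_space"
  assumes "a \<in> Basis" "b \<in> Basis"
  shows "\<bar>(F \<bullet> a) * (F \<bullet> b)\<bar> \<le> 1 * norm F^2"
proof -
  have "\<bar>F \<bullet> a\<bar> * \<bar>F \<bullet> b\<bar> \<le> norm F * norm F"
    using assms by (intro mult_mono Basis_le_norm) auto
  then show ?thesis by (simp add: abs_mult power2_eq_square)
qed

lemma inner_blinfun_self_eq_sum:
  fixes l :: "'v::euclidean_space \<Rightarrow>\<^sub>L 'v"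
  shows "l G \<bullet> G = (\<Sum>a\<in>Basis. \<Sum>b\<in>Basis. (l a \<bullet> b) * ((G \<bullet> a) * (G \<bullet> b)))"
proof -
  have "l G = (\<Sum>a\<in>Basis. (G \<bullet> a) *\<^sub>R l a)"
    by (subst euclidean_representation[symmetric, of G])
      (simp add: blinfun.sum_right blinfun.scaleR_right)
  then have "l G \<bullet> G = (\<Sum>a\<in>Basis. (G \<bullet> a) * (l a \<bullet> G))"
    by (simp add: inner_sum_left)
  also have "\<dots> = (\<Sum>a\<in>Basis. (G \<bullet> a) * (\<Sum>b\<in>Basis. (l a \<bullet> b) * (G \<bullet> b)))"
    by (subst euclidean_inner) simp
  also have "\<dots> = (\<Sum>a\<in>Basis. \<Sum>b\<in>Basis. (l a \<bullet> b) * ((G \<bullet> a) * (G \<bullet> b)))"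
    by (simp add: sum_distrib_left mult_ac)
  finally show ?thesis .
qed

section \<open>Uniform square integrability\<close>

definition sq_tail :: "'a measure \<Rightarrow> ('a \<Rightarrow> 'b::real_normed_vector) \<Rightarrow> real \<Rightarrow> real" where
  "sq_tail M f t = (\<integral>x. (if t \<le> norm (f x) then norm (f x)^2 else 0) \<partial>M)"

definition uniformly_sq_integrable :: "'a measure \<Rightarrow> (nat \<Rightarrow> 'a \<Rightarrow> 'b::real_normed_vector) \<Rightarrow> bool" where
  "uniformly_sq_integrable M V \<longleftrightarrow>
     (\<forall>e>0. \<forall>\<^sub>F k in sequentially. \<forall>n. sq_tail M (V n) (real k) < e)"

lemma sq_tail_lebesgue_on:
  assumes "\<Omega> \<in> sets lebesgue" "{x\<in>\<Omega>. t \<le> norm (f x)} \<in> sets lebesgue"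
  shows "sq_tail (leb_on \<Omega>) f t = (\<integral>x. norm (f x)^2 \<partial>leb_on {x\<in>\<Omega>. t \<le> norm (f x)})"
proof -
  have "sq_tail (leb_on \<Omega>) f t
      = (\<integral>x. indicator \<Omega> x *\<^sub>R (if t \<le> norm (f x) then norm (f x)^2 else 0) \<partial>lebesgue)"
    unfolding sq_tail_def using assms(1) by (intro integral_restrict_space) simp
  also have "\<dots> = (\<integral>x. indicator {x\<in>\<Omega>. t \<le> norm (f x)} x *\<^sub>R norm (f x)^2 \<partial>lebesgue)"
    by (intro Bochner_Integration.integral_cong) (auto simp: indicator_def)
  also have "\<dots> = (\<integral>x. norm (f x)^2 \<partial>leb_on {x\<in>\<Omega>. t \<le> norm (f x)})"
    using assms(2) by (intro integral_restrict_space[symmetric]) simp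
  finally show ?thesis .
qed

lemma sets_lebesgue_norm_ge:
  assumes \<Omega>: "\<Omega> \<in> sets lebesgue" and f: "f \<in> borel_measurable (leb_on \<Omega>)"
  shows "{x\<in>\<Omega>. t \<le> norm (f x)} \<in> sets lebesgue"
proof -
  have "{x \<in> space (leb_on \<Omega>). t \<le> norm (f x)} \<in> sets (leb_on \<Omega>)"
    using f by measurable
  then show ?thesis using \<Omega> by (simp add: sets_restrict_space_iff)
qed

lemma measure_lebesgue_norm_ge_le:
  assumes \<Omega>: "\<Omega> \<in> sets lebesgue" and int: "integrable (leb_on \<Omega>) (\<lambda>x. norm (f x)^2)" and "t > 0"
  shows "measure lebesgue {x\<in>\<Omega>. t \<le> norm (f x)} \<le> (\<integral>x. norm (f x)^2 \<partial>leb_on \<Omega>) / t^2"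
proof -
  have E: "{x\<in>\<Omega>. t \<le> norm (f x)} = {x \<in> space (leb_on \<Omega>). t^2 \<le> norm (f x)^2}"
    using \<open>t > 0\<close> by (auto simp: abs_le_square_iff[symmetric])
  have "measure lebesgue {x\<in>\<Omega>. t \<le> norm (f x)} = measure (leb_on \<Omega>) {x\<in>\<Omega>. t \<le> norm (f x)}"
    using \<Omega> by (simp add: measure_restrict_space)
  also have "\<dots> \<le> (\<integral>x. norm (f x)^2 \<partial>leb_on \<Omega>) / t^2"
    unfolding E using \<open>t > 0\<close> by (intro integral_Markov_inequality_measure[OF int sets.top]) auto
  finally show ?thesis .
qed

lemma uniformly_sq_integrable_if_equiintegrable:
  fixes V :: "nat \<Rightarrow> 'a::euclidean_space \<Rightarrow> 'b::euclidean_space"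
  assumes \<Omega>: "\<Omega> \<in> sets lebesgue"
    and meas: "\<And>n. V n \<in> borel_measurable (leb_on \<Omega>)"
    and int: "\<And>n. integrable (leb_on \<Omega>) (\<lambda>x. norm (V n x)^2)"
    and bdd: "\<And>n. (\<integral>x. norm (V n x)^2 \<partial>leb_on \<Omega>) \<le> C"
    and equi: "equiintegrable \<Omega> (\<lambda>n x. norm (V n x)^2)"
  shows "uniformly_sq_integrable (leb_on \<Omega>) V"
  unfolding uniformly_sq_integrable_def
proof (intro allI impI)
  fix e :: real assume "e > 0"
  then obtain \<delta> where \<delta>: "\<delta> > 0" and small: "\<And>n E. E \<in> sets lebesgue \<Longrightarrow> E \<subseteq> \<Omega> \<Longrightarrow>
      measure lebesgue E < \<delta> \<Longrightarrow> (\<integral>x. \<bar>norm (V n x)^2\<bar> \<partial>leb_on E) < e"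
    using equi unfolding equiintegrable_def by meson
  have "0 \<le> (\<integral>x. norm (V 0 x)^2 \<partial>leb_on \<Omega>)" by simp
  then have C: "C \<ge> 0" using bdd[of 0] by linarith
  obtain k0 :: nat where k0: "C / \<delta> < real k0" using reals_Archimedean2 by blast
  show "\<forall>\<^sub>F k in sequentially. \<forall>n. sq_tail (leb_on \<Omega>) (V n) (real k) < e"
  proof (intro eventually_sequentiallyI[of "max k0 1"] allI)
    fix k n :: nat assume "max k0 1 \<le> k"
    then have k: "C / \<delta> < real k" "1 \<le> real k" using k0 by auto
    let ?E = "{x\<in>\<Omega>. real k \<le> norm (V n x)}"
    have E: "?E \<in> sets lebesgue" by (rule sets_lebesgue_norm_ge[OF \<Omega> meas])
    have "measure lebesgue ?E \<le> (\<integral>x. norm (V n x)^2 \<partial>leb_on \<Omega>) / (real k)^2"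
      using k(2) by (intro measure_lebesgue_norm_ge_le[OF \<Omega> int]) auto
    also have "\<dots> \<le> C / (real k)^2"
      by (intro divide_right_mono bdd) simp
    also have "\<dots> \<le> C / real k"
      using k(2) C by (intro divide_left_mono) (auto simp: power2_eq_square)
    also have "\<dots> < \<delta>"
      using k \<delta> by (simp add: field_simps)
    finally have "(\<integral>x. \<bar>norm (V n x)^2\<bar> \<partial>leb_on ?E) < e"
      by (intro small E) auto
    then show "sq_tail (leb_on \<Omega>) (V n) (real k) < e"
      using sq_tail_lebesgue_on[OF \<Omega> E] by simp
  qed
qed

locale uniformly_sq_integrable_seq = finite_measure M for M :: "'a measure" +
  fixes V :: "nat \<Rightarrow> 'a \<Rightarrow> 'b::euclidean_space" and C :: real
  assumes V_measurable[measurable]: "\<And>n. V n \<in> borel_measurable M"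
    and integrable_sq: "\<And>n. integrable M (\<lambda>x. norm (V n x)^2)"
    and integral_sq_le: "\<And>n. (\<integral>x. norm (V n x)^2 \<partial>M) \<le> C"
    and uniformly_sq_integrable: "uniformly_sq_integrable M V"
begin

lemma integrable_sq_tail:
  "integrable M (\<lambda>x. if t \<le> norm (V n x) then norm (V n x)^2 else 0)"
  by (rule Bochner_Integration.integrable_bound[OF integrable_sq[of n]]) (auto intro!: AE_I2)

lemma abs_integral_mult_sq_le:
  assumes g: "g \<in> borel_measurable M" "AE x in M. \<bar>g x\<bar> \<le> Cg"
    and D: "D \<in> borel_measurable M" "AE x in M. \<bar>D x\<bar> \<le> B"
      "AE x in M. norm (V n x) < t \<longrightarrow> \<bar>D x\<bar> \<le> \<epsilon>"
    and "0 \<le> \<epsilon>"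
  shows "\<bar>\<integral>x. g x * (D x * norm (V n x)^2) \<partial>M\<bar> \<le> \<bar>Cg\<bar> * (\<epsilon> * C + \<bar>B\<bar> * sq_tail M (V n) t)"
proof -
  let ?T = "\<lambda>x. if t \<le> norm (V n x) then norm (V n x)^2 else 0"
  have "\<bar>\<integral>x. g x * (D x * norm (V n x)^2) \<partial>M\<bar> \<le> (\<integral>x. \<bar>g x * (D x * norm (V n x)^2)\<bar> \<partial>M)"
    by (rule integral_abs_bound)
  also have "\<dots> \<le> (\<integral>x. \<bar>Cg\<bar> * (\<epsilon> * norm (V n x)^2 + \<bar>B\<bar> * ?T x) \<partial>M)"
  proof (rule integral_mono_AE')
    show "integrable M (\<lambda>x. \<bar>Cg\<bar> * (\<epsilon> * norm (V n x)^2 + \<bar>B\<bar> * ?T x))"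
      using integrable_sq[of n] integrable_sq_tail[of t n] by auto
    show "AE x in M. 0 \<le> \<bar>Cg\<bar> * (\<epsilon> * norm (V n x)^2 + \<bar>B\<bar> * ?T x)"
      using \<open>0 \<le> \<epsilon>\<close> by (intro AE_I2) auto
    show "AE x in M. \<bar>g x * (D x * norm (V n x)^2)\<bar> \<le> \<bar>Cg\<bar> * (\<epsilon> * norm (V n x)^2 + \<bar>B\<bar> * ?T x)"
      using g(2) D(2,3)
    proof eventually_elim
      case (elim x)
      have "\<bar>D x\<bar> * norm (V n x)^2 \<le> \<epsilon> * norm (V n x)^2 + \<bar>B\<bar> * ?T x"
      proof (cases "t \<le> norm (V n x)")
        case True
        have "\<bar>D x\<bar> * norm (V n x)^2 \<le> \<bar>B\<bar> * norm (V n x)^2"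
          using elim by (intro mult_right_mono) auto
        then show ?thesis using True \<open>0 \<le> \<epsilon>\<close> by (simp add: add_increasing)
      next
        case False
        then show ?thesis using elim by (simp add: mult_right_mono)
      qed
      then show ?case
        using elim by (auto simp: abs_mult intro!: mult_mono)
    qed
  qed
  also have "\<dots> = \<bar>Cg\<bar> * (\<epsilon> * (\<integral>x. norm (V n x)^2 \<partial>M) + \<bar>B\<bar> * sq_tail M (V n) t)"
    using integrable_sq[of n] integrable_sq_tail[of t n] by (simp add: sq_tail_def)
  also have "\<dots> \<le> \<bar>Cg\<bar> * (\<epsilon> * C + \<bar>B\<bar> * sq_tail M (V n) t)"
    using integral_sq_le[of n] \<open>0 \<le> \<epsilon>\<close> by (intro mult_left_mono add_right_mono mult_left_mono) auto
  finally show ?thesis .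
qed

text \<open>On the set where norm (V n x) < k the factor D n is small once \<alpha> n k is small; the rest
  is a square tail at level k, small uniformly in n.\<close>
lemma tendsto_integral_vanishing_mult_sq:
  fixes D :: "nat \<Rightarrow> 'a \<Rightarrow> real" and \<alpha> :: "nat \<Rightarrow> real"
  assumes D_measurable: "\<And>n. D n \<in> borel_measurable M"
    and D_bounded: "\<And>n. AE x in M. \<bar>D n x\<bar> \<le> B"
    and D_small: "\<And>\<epsilon>. \<epsilon> > 0 \<Longrightarrow> \<exists>\<eta>>0. \<forall>n. AE x in M. norm (\<alpha> n *\<^sub>R V n x) < \<eta> \<longrightarrow> \<bar>D n x\<bar> < \<epsilon>"
    and \<alpha>: "\<alpha> \<longlonglongrightarrow> 0"
    and g: "g \<in> borel_measurable M" "AE x in M. \<bar>g x\<bar> \<le> Cg"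
  shows "(\<lambda>n. \<integral>x. g x * (D n x * norm (V n x)^2) \<partial>M) \<longlonglongrightarrow> 0"
proof (rule tendsto_zero_by_multiple[where K = "\<bar>Cg\<bar> * (C + \<bar>B\<bar>)"])
  fix \<epsilon> :: real assume "\<epsilon> > 0"
  obtain \<eta> where "\<eta> > 0" and \<eta>: "\<And>n. AE x in M. norm (\<alpha> n *\<^sub>R V n x) < \<eta> \<longrightarrow> \<bar>D n x\<bar> < \<epsilon>"
    using D_small[OF \<open>\<epsilon> > 0\<close>] by blast
  obtain k :: nat where k: "\<And>n. sq_tail M (V n) (real k) < \<epsilon>"
    using uniformly_sq_integrable \<open>\<epsilon> > 0\<close>
    unfolding uniformly_sq_integrable_def eventually_sequentially by blast
  have "\<forall>\<^sub>F n in sequentially. \<bar>\<alpha> n\<bar> * real k < \<eta>"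
    using tendstoD[OF tendsto_mult_right_zero[OF tendsto_rabs_zero[OF \<alpha>], of "real k"] \<open>\<eta> > 0\<close>]
    by eventually_elim (simp add: mult.commute)
  then show "\<forall>\<^sub>F n in sequentially.
      \<bar>\<integral>x. g x * (D n x * norm (V n x)^2) \<partial>M\<bar> \<le> \<bar>Cg\<bar> * (C + \<bar>B\<bar>) * \<epsilon>"
  proof eventually_elim
    case (elim n)
    have "norm (V n x) < real k \<longrightarrow> norm (\<alpha> n *\<^sub>R V n x) < \<eta>" for x
      using elim mult_left_mono[of "norm (V n x)" "real k" "\<bar>\<alpha> n\<bar>"] by auto
    then have "AE x in M. norm (V n x) < real k \<longrightarrow> \<bar>D n x\<bar> \<le> \<epsilon>"
      using \<eta>[of n] by (auto elim: eventually_mono)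
    then have "\<bar>\<integral>x. g x * (D n x * norm (V n x)^2) \<partial>M\<bar>
        \<le> \<bar>Cg\<bar> * (\<epsilon> * C + \<bar>B\<bar> * sq_tail M (V n) (real k))"
      using \<open>\<epsilon> > 0\<close> by (intro abs_integral_mult_sq_le[OF g D_measurable D_bounded]) auto
    also have "\<dots> \<le> \<bar>Cg\<bar> * (\<epsilon> * C + \<bar>B\<bar> * \<epsilon>)"
      using k[of n] by (intro mult_left_mono add_left_mono) auto
    finally show ?case by (simp add: algebra_simps)
  qed
qed

lemma weak_L1_lim_vanishing_mult_sq:
  fixes D :: "nat \<Rightarrow> 'a \<Rightarrow> real" and \<alpha> :: "nat \<Rightarrow> real"
  assumes D_measurable: "\<And>n. D n \<in> borel_measurable M"
    and D_bounded: "\<And>n. AE x in M. \<bar>D n x\<bar> \<le> B"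
    and D_small: "\<And>\<epsilon>. \<epsilon> > 0 \<Longrightarrow> \<exists>\<eta>>0. \<forall>n. AE x in M. norm (\<alpha> n *\<^sub>R V n x) < \<eta> \<longrightarrow> \<bar>D n x\<bar> < \<epsilon>"
    and \<alpha>: "\<alpha> \<longlonglongrightarrow> 0"
  shows "weak_L1_lim M (\<lambda>n x. D n x * norm (V n x)^2) (\<lambda>x. 0)"
  unfolding weak_L1_lim_def
  using integrable_bounded_mult[OF D_measurable D_bounded integrable_sq]
    tendsto_integral_vanishing_mult_sq[OF D_measurable D_bounded D_small \<alpha>]
  by simp

lemma integrable_comp_quadratic_growth:
  assumes "continuous_on UNIV \<psi>" "\<And>F. \<bar>\<psi> F\<bar> \<le> K * norm F^2"
  shows "integrable M (\<lambda>x. \<psi> (V n x))"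
proof (rule Bochner_Integration.integrable_bound[of M "\<lambda>x. K * norm (V n x)^2"])
  show "integrable M (\<lambda>x. K * norm (V n x)^2)" using integrable_sq[of n] by simp
  have [measurable]: "\<psi> \<in> borel_measurable borel"
    by (rule borel_measurable_continuous_onI[OF assms(1)])
  show "(\<lambda>x. \<psi> (V n x)) \<in> borel_measurable M" by measurable
qed (use assms(2) in \<open>auto intro!: AE_I2 order_trans[OF _ abs_ge_self]\<close>)

end

section \<open>Young measures generated by uniformly square-integrable sequences\<close>

locale young_measure_sq = uniformly_sq_integrable_seq M V C
  for M :: "'a measure" and V :: "nat \<Rightarrow> 'a \<Rightarrow> 'b::euclidean_space" and C +
  fixes \<nu> :: "'a \<Rightarrow> 'b measure"
  assumes prob_space_nu: "\<And>x. x \<in> space M \<Longrightarrow> prob_space (\<nu> x)"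
    and sets_nu: "\<And>x. x \<in> space M \<Longrightarrow> sets (\<nu> x) = sets borel"
    and borel_measurable_nu_integral_C0: "\<And>f :: 'b \<Rightarrow> real. continuous_on UNIV f \<Longrightarrow> (f \<longlongrightarrow> 0) at_infinity \<Longrightarrow>
          (\<lambda>x. \<integral>F. f F \<partial>\<nu> x) \<in> borel_measurable M"
    and tendsto_nu_integral_C0: "\<And>(f :: 'b \<Rightarrow> real) (g :: 'a \<Rightarrow> real). continuous_on UNIV f \<Longrightarrow> (f \<longlongrightarrow> 0) at_infinity \<Longrightarrow>
          integrable M g \<Longrightarrow> (\<lambda>n. \<integral>x. g x * f (V n x) \<partial>M) \<longlonglongrightarrow> (\<integral>x. g x * (\<integral>F. f F \<partial>\<nu> x) \<partial>M)"
begin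

lemma borel_measurable_nu:
  assumes "x \<in> space M" "continuous_on UNIV \<phi>"
  shows "\<phi> \<in> borel_measurable (\<nu> x)"
  by (subst measurable_cong_sets[OF sets_nu[OF assms(1)] refl])
    (rule borel_measurable_continuous_onI[OF assms(2)])

lemma abs_nu_integral_le:
  assumes "x \<in> space M" "integrable (\<nu> x) f" "\<And>F. \<bar>f F\<bar> \<le> (B::real)"
  shows "\<bar>\<integral>F. f F \<partial>\<nu> x\<bar> \<le> B"
proof -
  interpret prob_space "\<nu> x" using prob_space_nu[OF assms(1)] .
  have "\<bar>\<integral>F. f F \<partial>\<nu> x\<bar> \<le> (\<integral>F. \<bar>f F\<bar> \<partial>\<nu> x)"
    by (rule Bochner_Integration.integral_abs_bound)
  also have "\<dots> \<le> B"
    using assms(2,3) by (intro integral_le_const) auto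
  finally show ?thesis .
qed

lemma integrable_nu_mult_cutoff:
  assumes "x \<in> space M" and \<phi>: "continuous_on UNIV \<phi>"
  shows "integrable (\<nu> x) (\<lambda>F. \<phi> F * cutoff k F)"
proof -
  interpret prob_space "\<nu> x" using prob_space_nu[OF assms(1)] .
  obtain B where "\<And>F. \<bar>\<phi> F * cutoff k F\<bar> \<le> B" using bounded_mult_cutoff[OF \<phi>] by blast
  then show ?thesis
    using borel_measurable_nu[OF assms(1) continuous_on_mult_cutoff[OF \<phi>]]
    by (intro integrable_const_bound[of _ B]) auto
qed

lemma borel_measurable_nu_integral_mult_cutoff:
  assumes "continuous_on UNIV \<phi>"
  shows "(\<lambda>x. \<integral>F. \<phi> F * cutoff k F \<partial>\<nu> x) \<in> borel_measurable M"
  by (rule borel_measurable_nu_integral_C0[OF continuous_on_mult_cutoff[OF assms]])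
    (rule tendsto_mult_cutoff_at_infinity)

lemma integrable_nu_integral_mult_cutoff:
  assumes \<phi>: "continuous_on UNIV \<phi>"
  shows "integrable M (\<lambda>x. \<integral>F. \<phi> F * cutoff k F \<partial>\<nu> x)"
proof -
  obtain B where B: "\<And>F. \<bar>\<phi> F * cutoff k F\<bar> \<le> B" using bounded_mult_cutoff[OF \<phi>] by blast
  show ?thesis
    using abs_nu_integral_le[OF _ integrable_nu_mult_cutoff[OF _ \<phi>] B]
      borel_measurable_nu_integral_mult_cutoff[OF \<phi>]
    by (intro integrable_const_bound[of _ B]) auto
qed

lemma tendsto_nu_integral_mult_cutoff:
  assumes "x \<in> space M" "integrable (\<nu> x) \<phi>" and \<phi>: "continuous_on UNIV \<phi>"
  shows "(\<lambda>k. \<integral>F. \<phi> F * cutoff k F \<partial>\<nu> x) \<longlonglongrightarrow> (\<integral>F. \<phi> F \<partial>\<nu> x)"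
proof (rule integral_dominated_convergence[where w="\<lambda>F. \<bar>\<phi> F\<bar>"])
  show "\<phi> \<in> borel_measurable (\<nu> x)" using borel_measurable_nu[OF assms(1) \<phi>] .
  show "(\<lambda>F. \<phi> F * cutoff k F) \<in> borel_measurable (\<nu> x)" for k
    using borel_measurable_nu[OF assms(1) continuous_on_mult_cutoff[OF \<phi>]] .
qed (use assms(2) tendsto_mult_cutoff abs_mult_cutoff_le in \<open>auto intro!: AE_I2\<close>)

lemma nn_integral_nu_eq_SUP_cutoff:
  assumes x: "x \<in> space M" and \<phi>: "continuous_on UNIV \<phi>"
  shows "(\<integral>\<^sup>+F. ennreal \<bar>\<phi> F\<bar> \<partial>\<nu> x) = (SUP k. ennreal (\<integral>F. \<bar>\<phi> F\<bar> * cutoff k F \<partial>\<nu> x))"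
proof -
  have abs_\<phi>: "continuous_on UNIV (\<lambda>F. \<bar>\<phi> F\<bar>)" using \<phi> by (intro continuous_intros)
  define f where "f k F = ennreal (\<bar>\<phi> F\<bar> * cutoff k F)" for k F
  have f_measurable: "f k \<in> borel_measurable (\<nu> x)" for k
    unfolding f_def using borel_measurable_nu[OF x continuous_on_mult_cutoff[OF abs_\<phi>]] by measurable
  have inc: "incseq f"
    unfolding f_def incseq_def le_fun_def
    by (auto intro!: ennreal_leI mult_left_mono cutoff_mono)
  have "(SUP k. f k F) = ennreal \<bar>\<phi> F\<bar>" for F
  proof (rule LIMSEQ_unique)
    show "(\<lambda>k. f k F) \<longlonglongrightarrow> (SUP k. f k F)"
      using inc by (intro LIMSEQ_SUP) (auto simp: incseq_def le_fun_def)
    show "(\<lambda>k. f k F) \<longlonglongrightarrow> ennreal \<bar>\<phi> F\<bar>"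
      unfolding f_def by (intro tendsto_ennrealI tendsto_mult_cutoff)
  qed
  then have "(\<integral>\<^sup>+F. \<bar>\<phi> F\<bar> \<partial>\<nu> x) = (\<integral>\<^sup>+F. (SUP k. f k F) \<partial>\<nu> x)"
    by simp
  also have "\<dots> = (SUP k. integral\<^sup>N (\<nu> x) (f k))"
    by (rule nn_integral_monotone_convergence_SUP[OF inc f_measurable])
  also have "\<dots> = (SUP k. ennreal (\<integral>F. \<bar>\<phi> F\<bar> * cutoff k F \<partial>\<nu> x))"
    unfolding f_def
    by (intro SUP_cong refl nn_integral_eq_integral integrable_nu_mult_cutoff[OF x abs_\<phi>])
      (auto intro!: AE_I2 simp: cutoff_nonneg)
  finally show ?thesis .
qed

lemma borel_measurable_nn_integral_nu:
  fixes \<phi> :: "'b \<Rightarrow> real"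
  assumes \<phi>: "continuous_on UNIV \<phi>"
  shows "(\<lambda>x. \<integral>\<^sup>+F. ennreal \<bar>\<phi> F\<bar> \<partial>\<nu> x) \<in> borel_measurable M"
proof -
  have "continuous_on UNIV (\<lambda>F. \<bar>\<phi> F\<bar>)" using \<phi> by (intro continuous_intros)
  then have "(\<lambda>x. SUP k. ennreal (\<integral>F. \<bar>\<phi> F\<bar> * cutoff k F \<partial>\<nu> x)) \<in> borel_measurable M"
    using borel_measurable_nu_integral_mult_cutoff by measurable
  then show ?thesis
    by (rule measurable_cong[THEN iffD1, rotated]) (simp add: nn_integral_nu_eq_SUP_cutoff[OF _ \<phi>])
qed

text \<open>Measurability is assumed only for C_0 integrands. Where \<nu> x integrates \<phi>, the integral is
  the limit of the truncated integrals; elsewhere it is the junk value 0.\<close>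
lemma borel_measurable_nu_integral:
  fixes \<phi> :: "'b \<Rightarrow> real"
  assumes \<phi>: "continuous_on UNIV \<phi>"
  shows "(\<lambda>x. \<integral>F. \<phi> F \<partial>\<nu> x) \<in> borel_measurable M"
proof -
  define S where "S = {x \<in> space M. (\<integral>\<^sup>+F. ennreal \<bar>\<phi> F\<bar> \<partial>\<nu> x) < \<infinity>}"
  have S: "S \<in> sets M"
    unfolding S_def using borel_measurable_nn_integral_nu[OF \<phi>] by measurable
  have integrable_iff: "integrable (\<nu> x) \<phi> \<longleftrightarrow> x \<in> S" if "x \<in> space M" for x
    using borel_measurable_nu[OF that \<phi>] that unfolding S_def integrable_iff_bounded by simp
  have "(\<lambda>k. indicator S x * (\<integral>F. \<phi> F * cutoff k F \<partial>\<nu> x)) \<longlonglongrightarrow> (\<integral>F. \<phi> F \<partial>\<nu> x)"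
    if "x \<in> space M" for x
  proof (cases "x \<in> S")
    case True
    then show ?thesis
      using tendsto_nu_integral_mult_cutoff[OF that _ \<phi>] integrable_iff[OF that] by simp
  next
    case False
    then show ?thesis using integrable_iff[OF that] by (simp add: not_integrable_integral_eq)
  qed
  moreover have "(\<lambda>x. indicator S x * (\<integral>F. \<phi> F * cutoff k F \<partial>\<nu> x)) \<in> borel_measurable M" for k
    using S borel_measurable_nu_integral_mult_cutoff[OF \<phi>] by measurable
  ultimately show ?thesis by (rule borel_measurable_LIMSEQ_real)
qed

lemma integral_nu_integral_sq_cutoff_le:
  "(\<integral>x. (\<integral>F. norm F^2 * cutoff k F \<partial>\<nu> x) \<partial>M) \<le> C"
proof -
  have "(\<lambda>n. \<integral>x. 1 * (norm (V n x)^2 * cutoff k (V n x)) \<partial>M)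
      \<longlonglongrightarrow> (\<integral>x. 1 * (\<integral>F. norm F^2 * cutoff k F \<partial>\<nu> x) \<partial>M)"
    by (rule tendsto_nu_integral_C0[OF continuous_on_mult_cutoff[OF continuous_on_norm_sq]
          tendsto_mult_cutoff_at_infinity]) simp
  moreover have "(\<integral>x. 1 * (norm (V n x)^2 * cutoff k (V n x)) \<partial>M) \<le> C" for n
  proof -
    have "(\<integral>x. 1 * (norm (V n x)^2 * cutoff k (V n x)) \<partial>M) \<le> (\<integral>x. norm (V n x)^2 \<partial>M)"
      by (rule integral_mono_AE'[OF integrable_sq]) (auto intro!: AE_I2 mult_left_le cutoff_le_one)
    then show ?thesis using integral_sq_le[of n] by linarith
  qed
  ultimately show ?thesis by (auto intro: LIMSEQ_le_const2)
qed

lemma nn_integral_nu_sq_le: "(\<integral>\<^sup>+x. (\<integral>\<^sup>+F. ennreal (norm F^2) \<partial>\<nu> x) \<partial>M) \<le> ennreal C"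
proof -
  define P where "P k x = ennreal (\<integral>F. norm F^2 * cutoff k F \<partial>\<nu> x)" for k x
  have [measurable]: "P k \<in> borel_measurable M" for k
    unfolding P_def using borel_measurable_nu_integral_mult_cutoff[OF continuous_on_norm_sq]
    by measurable
  have "(\<integral>\<^sup>+x. (\<integral>\<^sup>+F. ennreal (norm F^2) \<partial>\<nu> x) \<partial>M) = (\<integral>\<^sup>+x. (SUP k. P k x) \<partial>M)"
    using nn_integral_nu_eq_SUP_cutoff[OF _ continuous_on_norm_sq]
    by (intro nn_integral_cong) (simp add: P_def)
  also have "\<dots> = (SUP k. \<integral>\<^sup>+x. P k x \<partial>M)"
  proof (rule nn_integral_monotone_convergence_SUP_AE)
    show "AE x in M. P k x \<le> P (Suc k) x" for k
      unfolding P_def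
      by (intro AE_I2 ennreal_leI integral_mono integrable_nu_mult_cutoff continuous_on_norm_sq
          mult_left_mono cutoff_mono) auto
  qed measurable
  also have "\<dots> \<le> ennreal C"
  proof (rule SUP_least)
    fix k
    have "(\<integral>\<^sup>+x. P k x \<partial>M) = ennreal (\<integral>x. (\<integral>F. norm F^2 * cutoff k F \<partial>\<nu> x) \<partial>M)"
      unfolding P_def
      by (intro nn_integral_eq_integral integrable_nu_integral_mult_cutoff[OF continuous_on_norm_sq]
          AE_I2 integral_nonneg) (auto simp: cutoff_nonneg)
    then show "(\<integral>\<^sup>+x. P k x \<partial>M) \<le> ennreal C"
      using integral_nu_integral_sq_cutoff_le[of k] by (simp add: ennreal_leI)
  qed
  finally show ?thesis .
qed

lemma AE_integrable_nu_sq: "AE x in M. integrable (\<nu> x) (\<lambda>F. norm F^2)"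
proof -
  have "(\<integral>\<^sup>+x. (\<integral>\<^sup>+F. ennreal (norm F^2) \<partial>\<nu> x) \<partial>M) \<noteq> \<infinity>"
    using nn_integral_nu_sq_le by (auto simp: top_unique)
  then have "AE x in M. (\<integral>\<^sup>+F. ennreal (norm F^2) \<partial>\<nu> x) \<noteq> \<infinity>"
    using borel_measurable_nn_integral_nu[OF continuous_on_norm_sq] by (intro nn_integral_PInf_AE) auto
  then show ?thesis
  proof (rule AE_mp, intro AE_I2 impI)
    fix x assume "x \<in> space M" "(\<integral>\<^sup>+F. ennreal (norm F^2) \<partial>\<nu> x) \<noteq> \<infinity>"
    then show "integrable (\<nu> x) (\<lambda>F. norm F^2)"
      using borel_measurable_nu[OF _ continuous_on_norm_sq]
      unfolding integrable_iff_bounded by (simp add: less_top)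
  qed
qed

lemma integrable_nu_integral_sq: "integrable M (\<lambda>x. \<integral>F. norm F^2 \<partial>\<nu> x)"
proof (rule integrableI_nonneg)
  show "(\<lambda>x. \<integral>F. norm F^2 \<partial>\<nu> x) \<in> borel_measurable M"
    by (rule borel_measurable_nu_integral[OF continuous_on_norm_sq])
  have "(\<integral>\<^sup>+x. ennreal (\<integral>F. norm F^2 \<partial>\<nu> x) \<partial>M) = (\<integral>\<^sup>+x. (\<integral>\<^sup>+F. ennreal (norm F^2) \<partial>\<nu> x) \<partial>M)"
  proof (rule nn_integral_cong_AE)
    show "AE x in M. ennreal (\<integral>F. norm F^2 \<partial>\<nu> x) = (\<integral>\<^sup>+F. ennreal (norm F^2) \<partial>\<nu> x)"
      using AE_integrable_nu_sq by eventually_elim (simp add: nn_integral_eq_integral)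
  qed
  also have "\<dots> < \<infinity>"
    using nn_integral_nu_sq_le by (simp add: le_less_trans)
  finally show "(\<integral>\<^sup>+x. ennreal (\<integral>F. norm F^2 \<partial>\<nu> x) \<partial>M) < \<infinity>" .
qed auto

context
  fixes \<phi> :: "'b \<Rightarrow> real" and K :: real
  assumes \<phi>_continuous: "continuous_on UNIV \<phi>"
    and \<phi>_growth: "\<And>F. \<bar>\<phi> F\<bar> \<le> K * norm F^2"
begin

lemma abs_mult_cutoff_le_quadratic: "\<bar>\<phi> F * cutoff k F\<bar> \<le> K * norm F^2"
  using abs_mult_cutoff_le[of \<phi> F k] \<phi>_growth[of F] by linarith

lemma AE_integrable_nu: "AE x in M. integrable (\<nu> x) \<phi>"
  using AE_integrable_nu_sq AE_space
  by eventually_elim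
    (rule integrable_quadratic_growth[OF _ borel_measurable_nu[OF _ \<phi>_continuous] \<phi>_growth])

lemma AE_abs_nu_integral_le: "AE x in M. \<bar>\<integral>F. \<phi> F \<partial>\<nu> x\<bar> \<le> K * (\<integral>F. norm F^2 \<partial>\<nu> x)"
  using AE_integrable_nu_sq AE_space
  by eventually_elim
    (rule abs_integral_quadratic_growth_le[OF _ borel_measurable_nu[OF _ \<phi>_continuous] \<phi>_growth])

lemma AE_abs_nu_integral_mult_cutoff_le:
  "AE x in M. \<forall>k. \<bar>\<integral>F. \<phi> F * cutoff k F \<partial>\<nu> x\<bar> \<le> K * (\<integral>F. norm F^2 \<partial>\<nu> x)"
  using AE_integrable_nu_sq AE_space
  by eventually_elim
    (intro allI abs_integral_quadratic_growth_le[OF _ _ abs_mult_cutoff_le_quadratic]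
      borel_measurable_nu[OF _ continuous_on_mult_cutoff[OF \<phi>_continuous]])

lemma integrable_nu_integral: "integrable M (\<lambda>x. \<integral>F. \<phi> F \<partial>\<nu> x)"
proof (rule Bochner_Integration.integrable_bound[OF _ borel_measurable_nu_integral[OF \<phi>_continuous]])
  show "integrable M (\<lambda>x. K * (\<integral>F. norm F^2 \<partial>\<nu> x))" using integrable_nu_integral_sq by auto
  show "AE x in M. norm (\<integral>F. \<phi> F \<partial>\<nu> x) \<le> norm (K * (\<integral>F. norm F^2 \<partial>\<nu> x))"
    using AE_abs_nu_integral_le by eventually_elim auto
qed

lemma tendsto_integral_nu_integral_mult_cutoff:
  assumes g: "g \<in> borel_measurable M" "AE x in M. \<bar>g x\<bar> \<le> Cg"
  shows "(\<lambda>k. \<integral>x. g x * (\<integral>F. \<phi> F * cutoff k F \<partial>\<nu> x) \<partial>M) \<longlonglongrightarrow> (\<integral>x. g x * (\<integral>F. \<phi> F \<partial>\<nu> x) \<partial>M)"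
proof (rule integral_dominated_convergence[where w="\<lambda>x. \<bar>Cg\<bar> * (\<bar>K\<bar> * (\<integral>F. norm F^2 \<partial>\<nu> x))"])
  show "(\<lambda>x. g x * (\<integral>F. \<phi> F \<partial>\<nu> x)) \<in> borel_measurable M"
    using g borel_measurable_nu_integral[OF \<phi>_continuous] by measurable
  show "(\<lambda>x. g x * (\<integral>F. \<phi> F * cutoff k F \<partial>\<nu> x)) \<in> borel_measurable M" for k
    using g borel_measurable_nu_integral_mult_cutoff[OF \<phi>_continuous] by measurable
  show "integrable M (\<lambda>x. \<bar>Cg\<bar> * (\<bar>K\<bar> * (\<integral>F. norm F^2 \<partial>\<nu> x)))"
    using integrable_nu_integral_sq by auto
  show "AE x in M. (\<lambda>k. g x * (\<integral>F. \<phi> F * cutoff k F \<partial>\<nu> x)) \<longlonglongrightarrow> g x * (\<integral>F. \<phi> F \<partial>\<nu> x)"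
    using AE_integrable_nu AE_space
    by eventually_elim (intro tendsto_mult_left tendsto_nu_integral_mult_cutoff \<phi>_continuous)
  show "AE x in M. norm (g x * (\<integral>F. \<phi> F * cutoff k F \<partial>\<nu> x))
      \<le> \<bar>Cg\<bar> * (\<bar>K\<bar> * (\<integral>F. norm F^2 \<partial>\<nu> x))" for k
    using AE_abs_nu_integral_mult_cutoff_le g(2)
  proof eventually_elim
    case (elim x)
    have "\<bar>\<integral>F. \<phi> F * cutoff k F \<partial>\<nu> x\<bar> \<le> K * (\<integral>F. norm F^2 \<partial>\<nu> x)"
      using elim(1) by blast
    also have "\<dots> \<le> \<bar>K\<bar> * (\<integral>F. norm F^2 \<partial>\<nu> x)"
      by (intro mult_right_mono) auto
    finally have "\<bar>\<integral>F. \<phi> F * cutoff k F \<partial>\<nu> x\<bar> \<le> \<bar>K\<bar> * (\<integral>F. norm F^2 \<partial>\<nu> x)" .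
    then show ?case using elim by (auto simp: abs_mult intro!: mult_mono)
  qed
qed

lemma abs_integral_cutoff_error_le:
  assumes g: "g \<in> borel_measurable M" "AE x in M. \<bar>g x\<bar> \<le> Cg"
  shows "\<bar>(\<integral>x. g x * \<phi> (V n x) \<partial>M) - (\<integral>x. g x * (\<phi> (V n x) * cutoff k (V n x)) \<partial>M)\<bar>
    \<le> \<bar>Cg\<bar> * \<bar>K\<bar> * sq_tail M (V n) (real k)"
proof -
  let ?T = "\<lambda>x. if real k \<le> norm (V n x) then norm (V n x)^2 else 0"
  have "(\<integral>x. g x * \<phi> (V n x) \<partial>M) - (\<integral>x. g x * (\<phi> (V n x) * cutoff k (V n x)) \<partial>M)
      = (\<integral>x. g x * (\<phi> (V n x) * (1 - cutoff k (V n x))) \<partial>M)"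
    using integrable_bounded_mult[OF g integrable_comp_quadratic_growth[OF \<phi>_continuous \<phi>_growth]]
      integrable_bounded_mult[OF g integrable_comp_quadratic_growth[OF
        continuous_on_mult_cutoff[OF \<phi>_continuous] abs_mult_cutoff_le_quadratic]]
    by (simp add: algebra_simps flip: Bochner_Integration.integral_diff)
  also have "\<bar>\<dots>\<bar> \<le> (\<integral>x. \<bar>g x * (\<phi> (V n x) * (1 - cutoff k (V n x)))\<bar> \<partial>M)"
    by (rule integral_abs_bound)
  also have "\<dots> \<le> (\<integral>x. \<bar>Cg\<bar> * \<bar>K\<bar> * ?T x \<partial>M)"
  proof (rule integral_mono_AE')
    show "integrable M (\<lambda>x. \<bar>Cg\<bar> * \<bar>K\<bar> * ?T x)" using integrable_sq_tail by auto
    show "AE x in M. \<bar>g x * (\<phi> (V n x) * (1 - cutoff k (V n x)))\<bar> \<le> \<bar>Cg\<bar> * \<bar>K\<bar> * ?T x"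
      using g(2)
    proof eventually_elim
      case (elim x)
      have "\<bar>g x\<bar> * \<bar>\<phi> (V n x) * (1 - cutoff k (V n x))\<bar> \<le> \<bar>Cg\<bar> * (\<bar>K\<bar> * ?T x)"
        using elim abs_mult_one_minus_cutoff_le[of \<phi> "V n x" K k, OF \<phi>_growth]
        by (intro mult_mono) auto
      then show ?case by (simp only: abs_mult mult.assoc)
    qed
  qed (auto intro!: AE_I2)
  also have "\<dots> = \<bar>Cg\<bar> * \<bar>K\<bar> * sq_tail M (V n) (real k)"
    by (simp add: sq_tail_def)
  finally show ?thesis .
qed

lemma tendsto_integral_mult_comp:
  assumes g: "g \<in> borel_measurable M" "AE x in M. \<bar>g x\<bar> \<le> Cg"
  shows "(\<lambda>n. \<integral>x. g x * \<phi> (V n x) \<partial>M) \<longlonglongrightarrow> (\<integral>x. g x * (\<integral>F. \<phi> F \<partial>\<nu> x) \<partial>M)"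
proof -
  have approx: "\<forall>e>0. \<forall>\<^sub>F k in sequentially. \<forall>n. \<bar>(\<integral>x. g x * \<phi> (V n x) \<partial>M)
      - (\<integral>x. g x * (\<phi> (V n x) * cutoff k (V n x)) \<partial>M)\<bar> \<le> \<bar>Cg\<bar> * \<bar>K\<bar> * e"
  proof (intro allI impI)
    fix e :: real assume "e > 0"
    have "\<forall>\<^sub>F k in sequentially. \<forall>n. sq_tail M (V n) (real k) < e"
      using uniformly_sq_integrable \<open>e > 0\<close> unfolding uniformly_sq_integrable_def by blast
    then show "\<forall>\<^sub>F k in sequentially. \<forall>n. \<bar>(\<integral>x. g x * \<phi> (V n x) \<partial>M)
      - (\<integral>x. g x * (\<phi> (V n x) * cutoff k (V n x)) \<partial>M)\<bar> \<le> \<bar>Cg\<bar> * \<bar>K\<bar> * e"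
    proof eventually_elim
      case (elim k)
      show ?case
      proof
        fix n
        have "\<bar>(\<integral>x. g x * \<phi> (V n x) \<partial>M) - (\<integral>x. g x * (\<phi> (V n x) * cutoff k (V n x)) \<partial>M)\<bar>
            \<le> \<bar>Cg\<bar> * \<bar>K\<bar> * sq_tail M (V n) (real k)"
          by (rule abs_integral_cutoff_error_le[OF g])
        also have "\<dots> \<le> \<bar>Cg\<bar> * \<bar>K\<bar> * e"
          using elim[rule_format, of n] by (intro mult_left_mono) auto
        finally show "\<bar>(\<integral>x. g x * \<phi> (V n x) \<partial>M)
            - (\<integral>x. g x * (\<phi> (V n x) * cutoff k (V n x)) \<partial>M)\<bar> \<le> \<bar>Cg\<bar> * \<bar>K\<bar> * e" .
      qed
    qed
  qed
  have "integrable M g"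
    using g by (intro integrable_const_bound[of _ Cg]) auto
  then have "(\<lambda>n. \<integral>x. g x * (\<phi> (V n x) * cutoff k (V n x)) \<partial>M)
      \<longlonglongrightarrow> (\<integral>x. g x * (\<integral>F. \<phi> F * cutoff k F \<partial>\<nu> x) \<partial>M)" for k
    by (intro tendsto_nu_integral_C0 continuous_on_mult_cutoff \<phi>_continuous
        tendsto_mult_cutoff_at_infinity)
  then show ?thesis
    by (rule tendsto_of_uniform_approx[OF approx _ tendsto_integral_nu_integral_mult_cutoff[OF g]])
qed

lemma weak_L1_lim_nu_integral: "weak_L1_lim M (\<lambda>n x. \<phi> (V n x)) (\<lambda>x. \<integral>F. \<phi> F \<partial>\<nu> x)"
  unfolding weak_L1_lim_def
  using integrable_comp_quadratic_growth[OF \<phi>_continuous \<phi>_growth] integrable_nu_integral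
    tendsto_integral_mult_comp by blast

end

lemma weak_L1_lim_quadratic_form_sum:
  fixes L :: "'a \<Rightarrow> 'b \<Rightarrow>\<^sub>L 'b"
  assumes L_measurable: "\<And>a b. (\<lambda>x. L x a \<bullet> b) \<in> borel_measurable M"
    and L_bounded: "\<And>x. x \<in> space M \<Longrightarrow> norm (L x) \<le> LB"
  shows "weak_L1_lim M (\<lambda>n x. L x (V n x) \<bullet> V n x)
    (\<lambda>x. \<Sum>a\<in>Basis. \<Sum>b\<in>Basis. (L x a \<bullet> b) * (\<integral>F. (F \<bullet> a) * (F \<bullet> b) \<partial>\<nu> x))"
proof -
  have "weak_L1_lim M (\<lambda>n x. \<Sum>a\<in>Basis. \<Sum>b\<in>Basis. (L x a \<bullet> b) * ((V n x \<bullet> a) * (V n x \<bullet> b)))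
    (\<lambda>x. \<Sum>a\<in>Basis. \<Sum>b\<in>Basis. (L x a \<bullet> b) * (\<integral>F. (F \<bullet> a) * (F \<bullet> b) \<partial>\<nu> x))"
  proof (intro weak_L1_lim_sum finite_Basis)
    fix a b :: 'b assume ab: "a \<in> Basis" "b \<in> Basis"
    have "weak_L1_lim M (\<lambda>n x. (V n x \<bullet> a) * (V n x \<bullet> b)) (\<lambda>x. \<integral>F. (F \<bullet> a) * (F \<bullet> b) \<partial>\<nu> x)"
      by (rule weak_L1_lim_nu_integral[OF _ abs_inner_Basis_mult_le[OF ab]]) (intro continuous_intros)
    moreover have "AE x in M. \<bar>L x a \<bullet> b\<bar> \<le> LB"
    proof (rule AE_I2)
      fix x assume "x \<in> space M"
      have "\<bar>L x a \<bullet> b\<bar> \<le> norm (L x a) * norm b" by (rule Cauchy_Schwarz_ineq2)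
      also have "\<dots> \<le> norm (L x) * norm a * norm b" by (intro mult_right_mono norm_blinfun) simp
      also have "\<dots> \<le> LB" using L_bounded[OF \<open>x \<in> space M\<close>] ab by simp
      finally show "\<bar>L x a \<bullet> b\<bar> \<le> LB" .
    qed
    ultimately show "weak_L1_lim M (\<lambda>n x. (L x a \<bullet> b) * ((V n x \<bullet> a) * (V n x \<bullet> b)))
        (\<lambda>x. (L x a \<bullet> b) * (\<integral>F. (F \<bullet> a) * (F \<bullet> b) \<partial>\<nu> x))"
      by (rule weak_L1_lim_mult_bounded[OF _ L_measurable])
  qed
  then show ?thesis by (simp only: inner_blinfun_self_eq_sum)
qed

lemma AE_nu_integral_quadratic_form:
  fixes L :: "'a \<Rightarrow> 'b \<Rightarrow>\<^sub>L 'b"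
  shows "AE x in M. (\<integral>F. L x F \<bullet> F \<partial>\<nu> x)
    = (\<Sum>a\<in>Basis. \<Sum>b\<in>Basis. (L x a \<bullet> b) * (\<integral>F. (F \<bullet> a) * (F \<bullet> b) \<partial>\<nu> x))"
  using AE_integrable_nu_sq AE_space
proof eventually_elim
  case (elim x)
  have "continuous_on UNIV (\<lambda>F::'b. (F \<bullet> a) * (F \<bullet> b))" for a b
    by (intro continuous_intros)
  then have "integrable (\<nu> x) (\<lambda>F. (F \<bullet> a) * (F \<bullet> b))" if "a \<in> Basis" "b \<in> Basis" for a b
    using elim by (intro integrable_quadratic_growth[OF _ borel_measurable_nu abs_inner_Basis_mult_le[OF that]])
  then show ?case by (simp add: inner_blinfun_self_eq_sum)
qed

end

section \<open>Integrands on a bounded domain\<close>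

lemma borel_measurable_lebesgue_on_AE_cong:
  fixes f g :: "'a::euclidean_space \<Rightarrow> 'b::euclidean_space"
  assumes S: "S \<in> sets lebesgue" and f: "f \<in> borel_measurable (lebesgue_on S)"
    and ae: "AE x in lebesgue_on S. f x = g x"
  shows "g \<in> borel_measurable (lebesgue_on S)"
proof -
  obtain N where N: "N \<in> null_sets lebesgue" "\<And>x. x \<in> S \<Longrightarrow> x \<notin> N \<Longrightarrow> f x = g x"
    using ae S unfolding AE_restrict_space_iff[of S lebesgue, simplified, OF S]
      completion.AE_iff_null_sets by auto
  have "f measurable_on S" using f S by (simp add: measurable_on_iff_borel_measurable)
  then have "g measurable_on S"
    by (rule measurable_on_spike[where S = N]) (use N in \<open>auto simp: negligible_iff_null_sets\<close>)
  then show ?thesis using S by (simp add: measurable_on_iff_borel_measurable)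
qed

lemma borel_measurable_lebesgue_on_continuous_comp:
  fixes U :: "'a::euclidean_space \<Rightarrow> 'b::euclidean_space \<Rightarrow> real"
  assumes S: "S \<in> sets lebesgue" and U: "continuous_on (S \<times> UNIV) (\<lambda>(x, G). U x G)"
    and G: "G \<in> borel_measurable (lebesgue_on S)"
  shows "(\<lambda>x. U x (G x)) \<in> borel_measurable (lebesgue_on S)"
proof -
  have "(\<lambda>x. x) \<in> borel_measurable (lebesgue_on S)"
    by (rule continuous_imp_measurable_on_sets_lebesgue[OF continuous_on_id S])
  from measurable_Pair[OF this G] have "(\<lambda>x. (x, G x)) \<in> lebesgue_on S \<rightarrow>\<^sub>M borel"
    unfolding borel_prod .
  then have "(\<lambda>x. (x, G x)) \<in> lebesgue_on S \<rightarrow>\<^sub>M restrict_space borel (S \<times> UNIV)"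
    by (rule measurable_restrict_space2[rotated]) auto
  moreover have "(\<lambda>(x, G). U x G) \<in> borel_measurable (restrict_space borel (S \<times> UNIV))"
    by (rule borel_measurable_continuous_on_restrict[OF U])
  ultimately have "(\<lambda>(x, G). U x G) \<circ> (\<lambda>x. (x, G x)) \<in> borel_measurable (lebesgue_on S)"
    by (rule measurable_comp)
  then show ?thesis by (simp add: o_def)
qed

lemma bounded_on_compact_Times_cball:
  fixes U :: "'a::euclidean_space \<Rightarrow> 'b::euclidean_space \<Rightarrow> real"
  assumes "compact K" "continuous_on (K \<times> UNIV) (\<lambda>(x, G). U x G)"
  obtains B where "\<And>x G. x \<in> K \<Longrightarrow> norm G \<le> R \<Longrightarrow> \<bar>U x G\<bar> \<le> B"
proof -
  have "compact ((\<lambda>(x, G). U x G) ` (K \<times> cball 0 R))"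
    using assms by (intro compact_continuous_image compact_Times continuous_on_subset[OF assms(2)]) auto
  then obtain B where B: "\<forall>y\<in>(\<lambda>(x, G). U x G) ` (K \<times> cball 0 R). norm y \<le> B"
    using compact_imp_bounded bounded_iff by blast
  show thesis
  proof (rule that)
    fix x and G :: 'b assume "x \<in> K" "norm G \<le> R"
    then have "(x, G) \<in> K \<times> cball 0 R" by simp
    then show "\<bar>U x G\<bar> \<le> B" using B by fastforce
  qed

qed

lemma uniformly_continuous_at_zero_on_compact:
  fixes U :: "'a::euclidean_space \<Rightarrow> 'b::euclidean_space \<Rightarrow> real"
  assumes "compact K" "continuous_on (K \<times> UNIV) (\<lambda>(x, G). U x G)" "\<epsilon> > 0"
  obtains \<eta> where "\<eta> > 0" "\<And>x G. x \<in> K \<Longrightarrow> norm G < \<eta> \<Longrightarrow> \<bar>U x G - U x 0\<bar> < \<epsilon>"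
proof -
  have "uniformly_continuous_on (K \<times> cball 0 1) (\<lambda>(x, G). U x G)"
    using assms by (intro compact_uniformly_continuous compact_Times continuous_on_subset[OF assms(2)]) auto
  then obtain d where "d > 0" and d: "\<And>p q. p \<in> K \<times> cball 0 1 \<Longrightarrow> q \<in> K \<times> cball 0 1 \<Longrightarrow>
      dist q p < d \<Longrightarrow> dist ((\<lambda>(x, G). U x G) q) ((\<lambda>(x, G). U x G) p) < \<epsilon>"
    using \<open>\<epsilon> > 0\<close> unfolding uniformly_continuous_on_def by metis
  show thesis
  proof (rule that[of "min d 1"])
    fix x and G :: 'b assume "x \<in> K" "norm G < min d 1"
    moreover have "dist (x, G) (x, 0) = norm G"
      by (simp add: dist_Pair_Pair dist_norm)
    ultimately have "dist (U x G) (U x 0) < \<epsilon>"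
      using d[of "(x, 0)" "(x, G)"] by simp
    then show "\<bar>U x G - U x 0\<bar> < \<epsilon>" by (simp add: dist_real_def)
  qed (use \<open>d > 0\<close> in simp)
qed

lemma young_measure_sq_lebesgue_on:
  fixes V :: "nat \<Rightarrow> 'a::euclidean_space \<Rightarrow> 'b::euclidean_space"
  assumes \<Omega>: "\<Omega> \<in> lmeasurable"
    and meas: "\<And>n. V n \<in> borel_measurable (leb_on \<Omega>)"
    and int: "\<And>n. integrable (leb_on \<Omega>) (\<lambda>x. norm (V n x)^2)"
    and bdd: "\<And>n. (\<integral>x. norm (V n x)^2 \<partial>leb_on \<Omega>) \<le> C"
    and equi: "equiintegrable \<Omega> (\<lambda>n x. norm (V n x)^2)"
    and YM: "generates_YM \<Omega> V \<nu>"
  shows "young_measure_sq (leb_on \<Omega>) V C \<nu>"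
proof -
  have "uniformly_sq_integrable (leb_on \<Omega>) V"
    using \<Omega> by (intro uniformly_sq_integrable_if_equiintegrable[OF _ meas int bdd equi]) auto
  then have "uniformly_sq_integrable_seq (leb_on \<Omega>) V C"
    by (intro uniformly_sq_integrable_seq.intro uniformly_sq_integrable_seq_axioms.intro
        finite_measure_lebesgue_on[OF \<Omega>] meas int bdd)
  moreover have "young_measure_sq_axioms (leb_on \<Omega>) V \<nu>"
    using YM unfolding generates_YM_def young_measure_sq_axioms_def by simp
  ultimately show ?thesis by (rule young_measure_sq.intro)
qed

lemma weak_L1_lim_rescaled_difference_mult_sq:
  fixes U :: "'a::euclidean_space \<Rightarrow> 'b::euclidean_space \<Rightarrow> real"
  assumes V: "uniformly_sq_integrable_seq (leb_on \<Omega>) V C"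
    and \<Omega>: "\<Omega> \<in> sets lebesgue" "bounded \<Omega>"
    and U: "continuous_on (closure \<Omega> \<times> UNIV) (\<lambda>(x, G). U x G)"
    and \<alpha>: "\<alpha> \<longlonglongrightarrow> 0" and \<alpha>V: "\<And>n. AE x in leb_on \<Omega>. norm (\<alpha> n *\<^sub>R V n x) \<le> R"
  shows "weak_L1_lim (leb_on \<Omega>) (\<lambda>n x. (U x (\<alpha> n *\<^sub>R V n x) - U x 0) * norm (V n x)^2) (\<lambda>x. 0)"
proof -
  have K: "compact (closure \<Omega>)" using \<Omega>(2) by (simp add: compact_closure)
  obtain B where B: "\<And>x G. x \<in> closure \<Omega> \<Longrightarrow> norm G \<le> \<bar>R\<bar> \<Longrightarrow> \<bar>U x G\<bar> \<le> B"
    using bounded_on_compact_Times_cball[OF K U] by blast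
  have U\<Omega>: "continuous_on (\<Omega> \<times> UNIV) (\<lambda>(x, G). U x G)"
    by (rule continuous_on_subset[OF U]) (use closure_subset in auto)
  show ?thesis
  proof (rule uniformly_sq_integrable_seq.weak_L1_lim_vanishing_mult_sq[OF V _ _ _ \<alpha>])
    show "(\<lambda>x. U x (\<alpha> n *\<^sub>R V n x) - U x 0) \<in> borel_measurable (leb_on \<Omega>)" for n
      using uniformly_sq_integrable_seq.V_measurable[OF V]
      by (intro borel_measurable_diff borel_measurable_lebesgue_on_continuous_comp[OF \<Omega>(1) U\<Omega>]) auto
    show "AE x in leb_on \<Omega>. \<bar>U x (\<alpha> n *\<^sub>R V n x) - U x 0\<bar> \<le> 2 * B" for n
      using \<alpha>V[of n] AE_space
    proof eventually_elim
      case (elim x)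
      then have "x \<in> closure \<Omega>" "norm (\<alpha> n *\<^sub>R V n x) \<le> \<bar>R\<bar>" using closure_subset by auto
      then have "\<bar>U x (\<alpha> n *\<^sub>R V n x)\<bar> \<le> B" "\<bar>U x 0\<bar> \<le> B" by (auto intro: B)
      then show ?case by linarith
    qed
    show "\<exists>\<eta>>0. \<forall>n. AE x in leb_on \<Omega>. norm (\<alpha> n *\<^sub>R V n x) < \<eta> \<longrightarrow> \<bar>U x (\<alpha> n *\<^sub>R V n x) - U x 0\<bar> < \<epsilon>"
      if "\<epsilon> > 0" for \<epsilon>
    proof -
      obtain \<eta> where "\<eta> > 0" and \<eta>: "\<And>x G. x \<in> closure \<Omega> \<Longrightarrow> norm G < \<eta> \<Longrightarrow> \<bar>U x G - U x 0\<bar> < \<epsilon>"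
        using uniformly_continuous_at_zero_on_compact[OF K U \<open>\<epsilon> > 0\<close>] by blast
      show ?thesis
      proof (intro exI[of _ \<eta>] conjI allI AE_I2 impI)
        fix n x assume "x \<in> space (leb_on \<Omega>)" "norm (\<alpha> n *\<^sub>R V n x) < \<eta>"
        then show "\<bar>U x (\<alpha> n *\<^sub>R V n x) - U x 0\<bar> < \<epsilon>"
          using closure_subset by (intro \<eta>) auto
      qed (rule \<open>\<eta> > 0\<close>)
    qed
  qed
qed

lemma weak_L1_lim_rescaled_mult_sq:
  fixes U :: "'a::euclidean_space \<Rightarrow> 'b::euclidean_space \<Rightarrow> real"
  assumes Y: "young_measure_sq (leb_on \<Omega>) V C \<nu>"
    and \<Omega>: "\<Omega> \<in> sets lebesgue" "bounded \<Omega>"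
    and U: "continuous_on (closure \<Omega> \<times> UNIV) (\<lambda>(x, G). U x G)"
    and \<alpha>: "\<alpha> \<longlonglongrightarrow> 0" and \<alpha>V: "\<And>n. AE x in leb_on \<Omega>. norm (\<alpha> n *\<^sub>R V n x) \<le> R"
  shows "weak_L1_lim (leb_on \<Omega>) (\<lambda>n x. U x (\<alpha> n *\<^sub>R V n x) * (norm (V n x))\<^sup>2)
    (\<lambda>x. U x 0 * (\<integral>F. (norm F)\<^sup>2 \<partial>\<nu> x))"
proof -
  interpret young_measure_sq "leb_on \<Omega>" V C \<nu> by (rule Y)
  have K: "compact (closure \<Omega>)" using \<Omega>(2) by (simp add: compact_closure)
  obtain B where B: "\<And>x G. x \<in> closure \<Omega> \<Longrightarrow> norm G \<le> 0 \<Longrightarrow> \<bar>U x G\<bar> \<le> B"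
    using bounded_on_compact_Times_cball[OF K U] by blast
  have "continuous_on (\<Omega> \<times> UNIV) (\<lambda>(x, G). U x G)"
    by (rule continuous_on_subset[OF U]) (use closure_subset in auto)
  then have "(\<lambda>x. U x 0) \<in> borel_measurable (leb_on \<Omega>)"
    by (rule borel_measurable_lebesgue_on_continuous_comp[OF \<Omega>(1)]) simp
  moreover have "AE x in leb_on \<Omega>. \<bar>U x 0\<bar> \<le> B"
    using closure_subset by (intro AE_I2 B) auto
  moreover have "weak_L1_lim (leb_on \<Omega>) (\<lambda>n x. norm (V n x)^2) (\<lambda>x. \<integral>F. norm F^2 \<partial>\<nu> x)"
    by (rule weak_L1_lim_nu_integral[OF continuous_on_norm_sq, of 1]) simp
  ultimately have "weak_L1_lim (leb_on \<Omega>) (\<lambda>n x. U x 0 * norm (V n x)^2)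
      (\<lambda>x. U x 0 * (\<integral>F. norm F^2 \<partial>\<nu> x))"
    by (intro weak_L1_lim_mult_bounded)
  with weak_L1_lim_rescaled_difference_mult_sq[OF young_measure_sq.axioms(1)[OF Y] \<Omega> U \<alpha> \<alpha>V]
  have "weak_L1_lim (leb_on \<Omega>)
      (\<lambda>n x. (U x (\<alpha> n *\<^sub>R V n x) - U x 0) * norm (V n x)^2 + U x 0 * norm (V n x)^2)
      (\<lambda>x. 0 + U x 0 * (\<integral>F. norm F^2 \<partial>\<nu> x))"
    by (rule weak_L1_lim_add)
  also have "(\<lambda>n x. (U x (\<alpha> n *\<^sub>R V n x) - U x 0) * norm (V n x)^2 + U x 0 * norm (V n x)^2)
      = (\<lambda>n x. U x (\<alpha> n *\<^sub>R V n x) * (norm (V n x))\<^sup>2)"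
    by (simp add: fun_eq_iff algebra_simps)
  finally show ?thesis by simp
qed

text \<open>\<nu> x has finite second moment only for almost every x, so the limit agrees with the sum of
  the entrywise limits only almost everywhere; its measurability comes from the completeness of
  Lebesgue measure.\<close>
lemma weak_L1_lim_quadratic_form:
  fixes L :: "'a::euclidean_space \<Rightarrow> 'b::euclidean_space \<Rightarrow>\<^sub>L 'b"
  assumes Y: "young_measure_sq (leb_on \<Omega>) V C \<nu>"
    and \<Omega>: "\<Omega> \<in> sets lebesgue" "bounded \<Omega>"
    and L: "continuous_on (closure \<Omega>) L"
  shows "weak_L1_lim (leb_on \<Omega>) (\<lambda>n x. L x (V n x) \<bullet> V n x) (\<lambda>x. \<integral>F. L x F \<bullet> F \<partial>\<nu> x)"
proof -
  interpret young_measure_sq "leb_on \<Omega>" V C \<nu> by (rule Y)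
  have "bounded (L ` closure \<Omega>)"
    using \<Omega>(2) by (intro compact_imp_bounded compact_continuous_image[OF L]) auto
  then obtain LB where LB: "\<forall>l\<in>L ` closure \<Omega>. norm l \<le> LB" unfolding bounded_iff by blast
  have "continuous_on \<Omega> (\<lambda>x. L x a \<bullet> b)" for a b
    using continuous_on_subset[OF L closure_subset] by (intro continuous_intros)
  then have L_measurable: "(\<lambda>x. L x a \<bullet> b) \<in> borel_measurable (leb_on \<Omega>)" for a b
    by (rule continuous_imp_measurable_on_sets_lebesgue[OF _ \<Omega>(1)])
  have lim: "weak_L1_lim (leb_on \<Omega>) (\<lambda>n x. L x (V n x) \<bullet> V n x)
    (\<lambda>x. \<Sum>a\<in>Basis. \<Sum>b\<in>Basis. (L x a \<bullet> b) * (\<integral>F. (F \<bullet> a) * (F \<bullet> b) \<partial>\<nu> x))"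
    using LB closure_subset by (intro weak_L1_lim_quadratic_form_sum L_measurable) auto
  show ?thesis
  proof (rule weak_L1_lim_AE_cong[OF lim refl])
    show "AE x in leb_on \<Omega>. (\<Sum>a\<in>Basis. \<Sum>b\<in>Basis. (L x a \<bullet> b) * (\<integral>F. (F \<bullet> a) * (F \<bullet> b) \<partial>\<nu> x))
        = (\<integral>F. L x F \<bullet> F \<partial>\<nu> x)"
      using AE_nu_integral_quadratic_form[of L] by eventually_elim (rule sym)
    with lim show "(\<lambda>x. \<integral>F. L x F \<bullet> F \<partial>\<nu> x) \<in> borel_measurable (leb_on \<Omega>)"
      unfolding weak_L1_lim_def
      by (blast intro: borel_measurable_lebesgue_on_AE_cong[OF \<Omega>(1)] borel_measurable_integrable)
  qed
qed

theorem lemma7p2: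
  fixes \<Omega> :: "(real^'d) set"
    and U :: "real^'d \<Rightarrow> real^'d^'m \<Rightarrow> real"
    and L :: "real^'d \<Rightarrow> ((real^'d^'m) \<Rightarrow>\<^sub>L (real^'d^'m))"
    and z :: "nat \<Rightarrow> real^'d \<Rightarrow> real^'m"
    and Dz :: "nat \<Rightarrow> real^'d \<Rightarrow> real^'d^'m"
    and \<alpha> :: "nat \<Rightarrow> real"
    and \<nu> :: "real^'d \<Rightarrow> (real^'d^'m) measure"
  assumes dom: "bounded_C1_domain \<Omega>"
    and U_cont: "continuous_on (closure \<Omega> \<times> UNIV) (\<lambda>(x, G). U x G)"
    and L_cont: "continuous_on (closure \<Omega>) L"
    and W12: "\<And>n. W12 \<Omega> (z n) (Dz n)"
    and W12_bdd: "\<exists>C. \<forall>n. (\<integral>x. norm (z n x) ^ 2 \<partial>leb_on \<Omega>)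
                        + (\<integral>x. norm (Dz n x) ^ 2 \<partial>leb_on \<Omega>) \<le> C"
    and equi: "equiintegrable \<Omega> (\<lambda>n x. norm (Dz n x) ^ 2)"
    and \<alpha>_pos: "\<And>n. \<alpha> n > 0"
    and \<alpha>_lim: "\<alpha> \<longlonglongrightarrow> 0"
    and \<alpha>_Linfty: "\<exists>C. \<forall>n. AE x in leb_on \<Omega>. norm (\<alpha> n *\<^sub>R Dz n x) \<le> C"
    and YM: "generates_YM \<Omega> Dz \<nu>"
  shows "\<exists>r::nat \<Rightarrow> nat. strict_mono r \<and>
           weak_L1_conv \<Omega> (\<lambda>n x. calF U L x (\<alpha> (r n)) (Dz (r n) x))
             (\<lambda>x. U x 0 * (\<integral>F. (norm F)\<^sup>2 \<partial>\<nu> x)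
                  + 1/2 * (\<integral>F. blinfun_apply (L x) F \<bullet> F \<partial>\<nu> x))"
proof -
  have "bounded \<Omega>" "open \<Omega>" using dom unfolding bounded_C1_domain_def by auto
  then have "\<Omega> \<in> lmeasurable" by (intro lmeasurable_open)
  then have \<Omega>: "\<Omega> \<in> lmeasurable" "\<Omega> \<in> sets lebesgue" "bounded \<Omega>"
    using \<open>bounded \<Omega>\<close> by (auto dest: fmeasurableD)
  obtain C where C: "\<And>n. (\<integral>x. norm (z n x)^2 \<partial>leb_on \<Omega>) + (\<integral>x. norm (Dz n x)^2 \<partial>leb_on \<Omega>) \<le> C"
    using W12_bdd by blast
  have "(\<integral>x. norm (Dz n x)^2 \<partial>leb_on \<Omega>) \<le> C" for n
  proof -
    have "0 \<le> (\<integral>x. norm (z n x)^2 \<partial>leb_on \<Omega>)" by simp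
    then show ?thesis using C[of n] by linarith
  qed
  then have Y: "young_measure_sq (leb_on \<Omega>) Dz C \<nu>"
    using W12 equi YM unfolding W12_def by (intro young_measure_sq_lebesgue_on[OF \<Omega>(1)]) auto
  obtain R where R: "\<And>n. AE x in leb_on \<Omega>. norm (\<alpha> n *\<^sub>R Dz n x) \<le> R"
    using \<alpha>_Linfty by blast
  have "weak_L1_lim (leb_on \<Omega>) (\<lambda>n x. calF U L x (\<alpha> n) (Dz n x))
      (\<lambda>x. U x 0 * (\<integral>F. (norm F)\<^sup>2 \<partial>\<nu> x) + 1/2 * (\<integral>F. L x F \<bullet> F \<partial>\<nu> x))"
    unfolding calF_def
    by (intro weak_L1_lim_add weak_L1_lim_cmult weak_L1_lim_rescaled_mult_sq[OF Y \<Omega>(2,3) U_cont \<alpha>_lim R]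
        weak_L1_lim_quadratic_form[OF Y \<Omega>(2,3) L_cont])
  then show ?thesis
    unfolding weak_L1_conv_iff_weak_L1_lim by (intro exI[of _ "\<lambda>n. n"]) (simp add: strict_mono_def)
qed

end
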